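(* Let $\lambda_1,\dots,\lambda_n$ be coherent probability measures on $\overline{\mathbb D}^2$, let $H$ be the set of $\phi\in\mathrm{Homeo}(\overline{\mathbb D}^2,\partial\overline{\mathbb D}^2)$ preserving each $\lambda_i$, and let $\Gamma=\{j(\phi):\phi\in H\}\subset\mathrm{Aut}((\overline{\mathbb D}^2)^n,\lambda_1\times\cdots\times\lambda_n)$, where $j(\phi)(p_1,\dots,p_n)=(\phi(p_1),\dots,\phi(p_n))$. Then the map $(\overline{\mathbb D}^2)^n\times\Gamma\to\mathcal F_n$, $(P_n,j(\phi))\mapsto\beta(P_n;\phi)$, is a cocycle of the dynamical system $((\overline{\mathbb D}^2)^n,\mathcal B((\overline{\mathbb D}^2)^n),\lambda_1\times\cdots\times\lambda_n,\Gamma)$ with values in $\mathcal F_n$; that is, it is measurable and for all $\phi,\psi\in H$ and $\lambda_1\times\cdots\times\lambda_n$-a.e. $P_n$, $\beta(P_n;\psi\circ\phi)=\beta(P_n;\phi)\,\beta(j(\phi)(P_n);\psi)$.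
   Context: $\mathcal B((\overline{\mathbb D}^2)^n)$ is the Borel $\sigma$-algebra. $\overline{\mathbb D}^2$ is the closed unit disk in $\mathbb R^2$, $\mathbb D^2$ its interior. Fix $n\ge1$ and distinct points $q_1,\dots,q_n\in\mathbb D^2$ equally spaced, in this order, on a diameter. The Artin braid group $B_n$ has generators $\sigma_1,\dots,\sigma_{n-1}$ with relations $\sigma_i\sigma_j=\sigma_j\sigma_i$ ($|i-j|\ge2$) and $\sigma_i\sigma_{i+1}\sigma_i=\sigma_{i+1}\sigma_i\sigma_{i+1}$; geometrically, $B_n$ is the set of equivalence classes (under continuous deformation through such objects) of geometrical braids, i.e. unions of $n$ arcs $\{(\gamma_i(t),t):t\in[0,1]\}\subset\mathbb D^2\times[0,1]$ with $\gamma_i(t)\ne\gamma_j(t)$ for $i\ne j$, joining $\{q_1,\dots,q_n\}\times\{0\}$ to $\{q_1,\dots,q_n\}\times\{1\}$, with product $bc$ given by concatenation ($b$ below $c$). The pure braid group $\mathcal F_n$ consists of classes with $\gamma_i(0)=\gamma_i(1)$ for all $i$. $\mathrm{Homeo}(\overline{\mathbb D}^2,\partial\overline{\mathbb D}^2)$ is the group of homeomorphisms of $\overline{\mathbb D}^2$ equal to the identity near the boundary. $\Omega^{2n}$ is the set of $(p_1,\dots,p_n)\in(\overline{\mathbb D}^2)^n$ such that for all $i\ne j$ and all $s\in[0,1]$, $(1-s)q_i+sp_i\ne(1-s)q_j+sp_j$. For $\phi\in\mathrm{Homeo}(\overline{\mathbb D}^2,\partial\overline{\mathbb D}^2)$ and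 $P_n=(p_1,\dots,p_n)$ with pairwise distinct $p_i\in\mathbb D^2$ such that both $P_n$ and $j(\phi)(P_n)$ lie in $\Omega^{2n}$, $\beta(P_n;\phi)\in\mathcal F_n$ is the class of the geometrical braid whose $i$-th strand is: the segment from $(q_i,0)$ to $(p_i,1/3)$, then the arc $(\phi_{3t-1}(p_i),t)$, $t\in[1/3,2/3]$, where $(\phi_\tau)$ is any isotopy in $\mathrm{Homeo}(\overline{\mathbb D}^2,\partial\overline{\mathbb D}^2)$ from the identity to $\phi$, then the segment from $(\phi(p_i),2/3)$ to $(q_i,1)$ (independent of the isotopy). Probability measures $\lambda_1,\dots,\lambda_n$ on $\overline{\mathbb D}^2$ are coherent if $\Omega^{2n}$ has full $\lambda_1\times\cdots\times\lambda_n$-measure. A cocycle of $(X,\mathcal B,\mu,\Gamma)$ with values in $G$ is a measurable $\alpha:X\times\Gamma\to G$ with $\alpha(x,\gamma_1\gamma_2)=\alpha(x,\gamma_1)\alpha(\gamma_1x,\gamma_2)$ for all $\gamma_1,\gamma_2$ and a.e. $x$, where $\gamma_1\gamma_2$ denotes applying $\gamma_1$ first and then $\gamma_2$. *)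

theory Defs
  imports "HOL-Analysis.Analysis" "HOL-Probability.Probability"
begin

text \<open>Points of the plane are complex numbers; the closed disk is cball 0 1,
  the open disk ball 0 1.  An n-tuple (p_1,...,p_n) is a function
  nat => complex, indices 0..n-1, value undefined outside (as in PiE / PiM).\<close>

text \<open>Base points q_0,...,q_{n-1}: distinct, in the open disk, equally spaced in this
  order on a diameter (a line through the centre).\<close>
definition base_points :: "nat \<Rightarrow> (nat \<Rightarrow> complex) \<Rightarrow> bool" where
  "base_points n q \<longleftrightarrow>
     (\<exists>c d. d \<noteq> 0 \<and> (\<exists>r::real. c = r *\<^sub>R d) \<and> (\<forall>i<n. q i = c + of_nat i * d))
     \<and> (\<forall>i<n. q i \<in> ball 0 1)"

definition Conf :: "nat \<Rightarrow> (nat \<Rightarrow> complex) set" where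
  "Conf n = {x. (\<forall>i<n. x i \<in> ball 0 1) \<and> (\<forall>i<n. \<forall>j<n. i \<noteq> j \<longrightarrow> x i \<noteq> x j)
                \<and> (\<forall>i. n \<le> i \<longrightarrow> x i = undefined)}"

text \<open>A geometric pure braid is a path in Conf n from q to q; its class (an element of
  the pure braid group F_n) is its path-homotopy class in Conf n.\<close>
definition braid_class :: "nat \<Rightarrow> (real \<Rightarrow> nat \<Rightarrow> complex) \<Rightarrow> (real \<Rightarrow> nat \<Rightarrow> complex) set" where
  "braid_class n g = {h. homotopic_paths (Conf n) g h}"

text \<open>Product of classes: concatenation, first factor below (run first).\<close>
definition braid_mult :: "nat \<Rightarrow> (real \<Rightarrow> nat \<Rightarrow> complex) set \<Rightarrow> (real \<Rightarrow> nat \<Rightarrow> complex) set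
                           \<Rightarrow> (real \<Rightarrow> nat \<Rightarrow> complex) set" where
  "braid_mult n A B = {k. \<exists>a\<in>A. \<exists>b\<in>B. homotopic_paths (Conf n) k (a +++ b)}"

definition Omega :: "nat \<Rightarrow> (nat \<Rightarrow> complex) \<Rightarrow> (nat \<Rightarrow> complex) set" where
  "Omega n q = {P \<in> PiE {..<n} (\<lambda>_. cball 0 1).
      \<forall>i<n. \<forall>j<n. i \<noteq> j \<longrightarrow>
        (\<forall>s\<in>{0..1::real}. (1 - s) *\<^sub>R q i + s *\<^sub>R P i \<noteq> (1 - s) *\<^sub>R q j + s *\<^sub>R P j)}"

definition jmap :: "nat \<Rightarrow> (complex \<Rightarrow> complex) \<Rightarrow> (nat \<Rightarrow> complex) \<Rightarrow> nat \<Rightarrow> complex" where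
  "jmap n \<phi> P = (\<lambda>i. if i < n then \<phi> (P i) else undefined)"

definition rel_homeo :: "(complex \<Rightarrow> complex) \<Rightarrow> bool" where
  "rel_homeo \<phi> \<longleftrightarrow> (\<exists>g. homeomorphism (cball 0 1) (cball 0 1) \<phi> g)
     \<and> (\<exists>\<epsilon>>0. \<forall>z. 1 - \<epsilon> < norm z \<and> norm z \<le> 1 \<longrightarrow> \<phi> z = z)"

definition disk_isotopy :: "(real \<Rightarrow> complex \<Rightarrow> complex) \<Rightarrow> (complex \<Rightarrow> complex) \<Rightarrow> bool" where
  "disk_isotopy I \<phi> \<longleftrightarrow> continuous_on ({0..1} \<times> cball 0 1) (\<lambda>(t, z). I t z)
     \<and> (\<forall>t\<in>{0..1}. rel_homeo (I t))
     \<and> (\<forall>z\<in>cball 0 1. I 0 z = z \<and> I 1 z = \<phi> z)"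

definition braid_path :: "nat \<Rightarrow> (nat \<Rightarrow> complex) \<Rightarrow> (nat \<Rightarrow> complex) \<Rightarrow> (real \<Rightarrow> complex \<Rightarrow> complex)
                           \<Rightarrow> (complex \<Rightarrow> complex) \<Rightarrow> real \<Rightarrow> nat \<Rightarrow> complex" where
  "braid_path n q P I \<phi> = (\<lambda>t i. if i < n then
      (if t \<le> 1/3 then (1 - 3*t) *\<^sub>R q i + (3*t) *\<^sub>R P i
       else if t \<le> 2/3 then I (3*t - 1) (P i)
       else (1 - (3*t - 2)) *\<^sub>R \<phi> (P i) + (3*t - 2) *\<^sub>R q i)
     else undefined)"

text \<open>beta(P;phi), as a pure braid class; the empty set where it is not defined.
  The class of any isotopy is taken (the union over isotopies, which is one class
  since the class is independent of the isotopy).\<close>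
definition beta :: "nat \<Rightarrow> (nat \<Rightarrow> complex) \<Rightarrow> (nat \<Rightarrow> complex) \<Rightarrow> (complex \<Rightarrow> complex)
                     \<Rightarrow> (real \<Rightarrow> nat \<Rightarrow> complex) set" where
  "beta n q P \<phi> =
     (if P \<in> Omega n q \<and> jmap n \<phi> P \<in> Omega n q \<and> (\<forall>i<n. P i \<in> ball 0 1)
           \<and> (\<forall>i<n. \<forall>j<n. i \<noteq> j \<longrightarrow> P i \<noteq> P j)
      then {h. \<exists>I. disk_isotopy I \<phi> \<and> h \<in> braid_class n (braid_path n q P I \<phi>)}
      else {})"

definition preserves :: "(complex \<Rightarrow> complex) \<Rightarrow> complex measure \<Rightarrow> bool" where
  "preserves \<phi> M \<longleftrightarrow> \<phi> \<in> measurable M M \<and> distr M M \<phi> = M"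

end

(* The braid beta(P; phi) is the class of a loop in the configuration space: straight segments
   carry the base points q to P, the isotopy from the identity to phi carries P to phi(P), and
   straight segments bring phi(P) back to q.  In the product of the loops for (P; phi) and for
   (phi(P); psi), the segments returning from phi(P) cancel against the segments leaving for
   phi(P); what remains is the loop of P under the concatenated isotopy from the identity to
   psi o phi.  Conversely, every isotopy K to psi o phi arises in this way up to homotopy:
   join phi to the identity by the Alexander trick, undo it and then run K.  All three braids
   are defined for almost every P because phi and psi o phi preserve the product measure.
   Measurability holds because beta is locally constant where it is defined: along a straight
   segment of admissible configurations the loops deform into each other, and the open set of
   admissible configurations is a countable union of convex boxes. *)

theory Submission
  imports Defs
begin

section \<open>Homeomorphisms of the disk fixing a collar of the boundary\<close>

lemma rel_homeo_homeomorphismE: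
  assumes "rel_homeo \<phi>"
  obtains g where "homeomorphism (cball 0 1) (cball 0 1) \<phi> g"
  using assms unfolding rel_homeo_def by blast

lemma rel_homeo_collarE:
  assumes "rel_homeo \<phi>"
  obtains e where "0 < e" "e \<le> 1" "\<And>z. 1 - e < norm z \<Longrightarrow> norm z \<le> 1 \<Longrightarrow> \<phi> z = z"
proof -
  obtain e where "e > 0" "\<forall>z. 1 - e < norm z \<and> norm z \<le> 1 \<longrightarrow> \<phi> z = z"
    using assms unfolding rel_homeo_def by blast
  then show thesis
    by (intro that[of "min e 1"]) auto
qed

lemma rel_homeo_cball: "rel_homeo \<phi> \<Longrightarrow> z \<in> cball 0 1 \<Longrightarrow> \<phi> z \<in> cball 0 1"
  by (metis homeomorphism_image1 image_eqI rel_homeo_homeomorphismE)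

lemma rel_homeo_continuous_on: "rel_homeo \<phi> \<Longrightarrow> continuous_on (cball 0 1) \<phi>"
  by (metis homeomorphism_cont1 rel_homeo_homeomorphismE)

lemma rel_homeo_inj_on: "rel_homeo \<phi> \<Longrightarrow> inj_on \<phi> (cball 0 1)"
  by (metis homeomorphism_apply1 inj_on_inverseI rel_homeo_homeomorphismE)

lemma rel_homeo_ball:
  assumes \<phi>: "rel_homeo \<phi>" and z: "z \<in> ball 0 1"
  shows "\<phi> z \<in> ball 0 1"
proof (rule ccontr)
  assume "\<phi> z \<notin> ball 0 1"
  moreover have "\<phi> z \<in> cball 0 1"
    using rel_homeo_cball[OF \<phi>] z by auto
  ultimately have "norm (\<phi> z) = 1"
    by auto
  moreover obtain e where "0 < e" "\<And>w. 1 - e < norm w \<Longrightarrow> norm w \<le> 1 \<Longrightarrow> \<phi> w = w"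
    using rel_homeo_collarE[OF \<phi>] by blast
  ultimately have "\<phi> (\<phi> z) = \<phi> z"
    by auto
  then have "\<phi> z = z"
    using inj_onD[OF rel_homeo_inj_on[OF \<phi>]] \<open>\<phi> z \<in> cball 0 1\<close> z by auto
  then show False
    using \<open>\<phi> z \<notin> ball 0 1\<close> z by simp
qed

lemma rel_homeo_inverse:
  assumes \<phi>: "rel_homeo \<phi>" and g: "homeomorphism (cball 0 1) (cball 0 1) \<phi> g"
  shows "rel_homeo g"
proof -
  obtain e where e: "0 < e" "\<And>z. 1 - e < norm z \<Longrightarrow> norm z \<le> 1 \<Longrightarrow> \<phi> z = z"
    using rel_homeo_collarE[OF \<phi>] by blast
  have "g z = z" if "1 - e < norm z" "norm z \<le> 1" for z
    using homeomorphism_apply1[OF g, of z] e(2)[OF that] that(2) by simp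
  then show ?thesis
    unfolding rel_homeo_def using homeomorphism_symD[OF g] e(1) by blast
qed

lemma rel_homeo_compose:
  assumes f: "rel_homeo f" and h: "rel_homeo h"
  shows "rel_homeo (f \<circ> h)"
proof -
  obtain e1 where e1: "0 < e1" "\<And>z. 1 - e1 < norm z \<Longrightarrow> norm z \<le> 1 \<Longrightarrow> f z = z"
    using rel_homeo_collarE[OF f] by blast
  obtain e2 where e2: "0 < e2" "\<And>z. 1 - e2 < norm z \<Longrightarrow> norm z \<le> 1 \<Longrightarrow> h z = z"
    using rel_homeo_collarE[OF h] by blast
  obtain g1 g2 where "homeomorphism (cball 0 1) (cball 0 1) f g1"
    "homeomorphism (cball 0 1) (cball 0 1) h g2"
    using rel_homeo_homeomorphismE f h by metis
  then have "homeomorphism (cball 0 1) (cball 0 1) (f \<circ> h) (g2 \<circ> g1)"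
    by (rule homeomorphism_compose[rotated])
  moreover have "\<forall>z. 1 - min e1 e2 < norm z \<and> norm z \<le> 1 \<longrightarrow> (f \<circ> h) z = z"
    using e1 e2 by auto
  moreover have "min e1 e2 > 0"
    using e1 e2 by simp
  ultimately show ?thesis
    unfolding rel_homeo_def by blast
qed

section \<open>The Alexander trick\<close>

definition alexander_isotopy :: "(complex \<Rightarrow> complex) \<Rightarrow> real \<Rightarrow> complex \<Rightarrow> complex" where
  "alexander_isotopy \<phi> t z = (if norm z < t then t *\<^sub>R \<phi> (z /\<^sub>R t) else z)"

lemma alexander_isotopy_fixes_collar:
  assumes \<phi>: "\<And>w. 1 - e < norm w \<Longrightarrow> norm w \<le> 1 \<Longrightarrow> \<phi> w = w" and z: "t * (1 - e) < norm z"
  shows "alexander_isotopy \<phi> t z = z"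
proof (cases "norm z < t")
  case True
  then have t: "t > 0"
    by (meson norm_ge_zero order.strict_trans1)
  have "1 - e < norm (z /\<^sub>R t)" "norm (z /\<^sub>R t) \<le> 1"
    using z True t by (simp_all add: field_simps)
  then have "\<phi> (z /\<^sub>R t) = z /\<^sub>R t"
    by (rule \<phi>)
  then show ?thesis
    using True t by (simp add: alexander_isotopy_def)
qed (simp add: alexander_isotopy_def)

lemma norm_alexander_isotopy_le:
  assumes \<phi>: "rel_homeo \<phi>" and t: "0 \<le> t"
  shows "norm (alexander_isotopy \<phi> t z) \<le> max t (norm z)"
proof (cases "norm z < t")
  case True
  then have "t > 0"
    by (meson norm_ge_zero order.strict_trans1)
  with True have "norm (z /\<^sub>R t) < 1"
    by (simp add: field_simps)
  then have "norm (\<phi> (z /\<^sub>R t)) \<le> 1"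
    using rel_homeo_cball[OF \<phi>, of "z /\<^sub>R t"] by simp
  then have "norm (t *\<^sub>R \<phi> (z /\<^sub>R t)) \<le> t"
    using t by (simp add: mult_left_le)
  then show ?thesis
    using True by (simp add: alexander_isotopy_def)
qed (simp add: alexander_isotopy_def)

lemma alexander_isotopy_continuous_at_origin:
  assumes \<phi>: "rel_homeo \<phi>"
  shows "continuous (at (0, 0) within {0..1} \<times> cball 0 1) (\<lambda>y. alexander_isotopy \<phi> (fst y) (snd y))"
proof -
  define X where "X = {0..1::real} \<times> cball (0::complex) 1"
  define f where "f = (\<lambda>y :: real \<times> complex. alexander_isotopy \<phi> (fst y) (snd y))"
  have "norm (f y) \<le> max (fst y) (norm (snd y))" if "y \<in> X" for y
    using norm_alexander_isotopy_le[OF \<phi>, where t = "fst y" and z = "snd y"] that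
    by (simp add: X_def f_def mem_Times_iff)
  then have bound: "\<forall>\<^sub>F y in at (0, 0) within X. norm (f y) \<le> max (fst y) (norm (snd y))"
    by (simp add: eventually_at_filter)
  have "((\<lambda>y. max (fst y) (norm (snd y))) \<longlongrightarrow> max (fst (0::real, 0::complex)) (norm (snd (0::real, 0::complex))))
      (at (0, 0) within X)"
    by (intro tendsto_intros)
  then have "(f \<longlongrightarrow> 0) (at (0, 0) within X)"
    by (intro Lim_null_comparison[OF bound]) simp
  then show ?thesis
    by (simp add: continuous_within X_def f_def alexander_isotopy_def)
qed

lemma continuous_on_alexander_isotopy:
  assumes \<phi>: "rel_homeo \<phi>"
  shows "continuous_on ({0..1} \<times> cball 0 1) (\<lambda>(t, z). alexander_isotopy \<phi> t z)"
proof -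
  define f where "f = (\<lambda>y :: real \<times> complex. alexander_isotopy \<phi> (fst y) (snd y))"
  obtain e where e: "0 < e" "e \<le> 1" and collar: "\<And>w. 1 - e < norm w \<Longrightarrow> norm w \<le> 1 \<Longrightarrow> \<phi> w = w"
    using rel_homeo_collarE[OF \<phi>] by blast
  \<comment> \<open>thanks to the collar, the map is the identity on all of \<open>U1\<close>\<close>
  define U1 where "U1 = {y :: real \<times> complex. fst y * (1 - e) < norm (snd y)}"
  define U2 where "U2 = {y :: real \<times> complex. 0 < fst y \<and> norm (snd y) < fst y}"
  have U: "open U1" "open U2"
    unfolding U1_def U2_def by (intro open_Collect_less open_Collect_conj continuous_intros)+
  have U1: "continuous_on U1 f"
    by (rule continuous_on_eq[OF continuous_on_snd])
      (auto simp: U1_def f_def alexander_isotopy_fixes_collar[OF collar])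
  have "continuous_on U2 (\<lambda>y. \<phi> (snd y /\<^sub>R fst y))"
    by (rule continuous_on_compose2[OF rel_homeo_continuous_on[OF \<phi>]])
      (auto intro!: continuous_intros simp: U2_def field_simps)
  then have "continuous_on U2 (\<lambda>y. fst y *\<^sub>R \<phi> (snd y /\<^sub>R fst y))"
    by (intro continuous_intros)
  then have U2: "continuous_on U2 f"
    by (rule continuous_on_eq) (auto simp: U2_def f_def alexander_isotopy_def)
  have "continuous (at x within {0..1} \<times> cball 0 1) f" if x: "x \<in> {0..1} \<times> cball 0 1" for x
  proof (cases "x = (0, 0)")
    case True
    then show ?thesis
      using alexander_isotopy_continuous_at_origin[OF \<phi>] by (simp add: f_def)
  next
    case False
    obtain t z where xtz: "x = (t, z)" "0 \<le> t" "norm z \<le> 1"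
      using x by (cases x) auto
    have "t * (1 - e) < norm z \<or> (0 < t \<and> norm z < t)"
    proof (cases "t = 0")
      case False
      then have "t * (1 - e) < t"
        using xtz e by (simp add: algebra_simps)
      then show ?thesis
        using xtz False by linarith
    qed (use False xtz in auto)
    then have "x \<in> U1 \<or> x \<in> U2"
      by (simp add: U1_def U2_def xtz)
    then show ?thesis
      using U U1 U2 by (metis continuous_at_imp_continuous_within continuous_on_eq_continuous_at)
  qed
  then show ?thesis
    unfolding continuous_on_eq_continuous_within f_def case_prod_beta by blast
qed

lemma alexander_isotopy_inverse:
  assumes \<phi>: "rel_homeo \<phi>" and g: "homeomorphism (cball 0 1) (cball 0 1) \<phi> g"
  shows "alexander_isotopy g t (alexander_isotopy \<phi> t z) = z"
proof (cases "norm z < t")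
  case True
  then have t: "t > 0"
    by (meson norm_ge_zero order.strict_trans1)
  have "z /\<^sub>R t \<in> ball 0 1"
    using True t by (simp add: field_simps)
  then have "norm (t *\<^sub>R \<phi> (z /\<^sub>R t)) < t" and "g (\<phi> (z /\<^sub>R t)) = z /\<^sub>R t"
    using rel_homeo_ball[OF \<phi>] homeomorphism_apply1[OF g] t by auto
  then show ?thesis
    using True t by (simp add: alexander_isotopy_def)
qed (simp add: alexander_isotopy_def)

lemma rel_homeo_alexander_isotopy:
  assumes \<phi>: "rel_homeo \<phi>" and t: "t \<in> {0..1}"
  shows "rel_homeo (alexander_isotopy \<phi> t)"
proof -
  have continuous: "continuous_on (cball 0 1) (alexander_isotopy f t)" if "rel_homeo f" for f
  proof -
    have "continuous_on (cball 0 1) (\<lambda>z. (\<lambda>(t, z). alexander_isotopy f t z) (t, z))"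
      by (rule continuous_on_compose2[OF continuous_on_alexander_isotopy[OF that]])
        (use t in \<open>auto intro!: continuous_intros\<close>)
    then show ?thesis
      by simp
  qed
  have maps: "alexander_isotopy f t ` cball 0 1 \<subseteq> cball 0 1" if f: "rel_homeo f" for f
  proof clarsimp
    fix z :: complex
    assume "norm z \<le> 1"
    then show "norm (alexander_isotopy f t z) \<le> 1"
      using norm_alexander_isotopy_le[OF f, of t z] t by (simp add: max_def split: if_splits)
  qed
  obtain g where g: "homeomorphism (cball 0 1) (cball 0 1) \<phi> g"
    using rel_homeo_homeomorphismE[OF \<phi>] by blast
  have g': "rel_homeo g"
    by (rule rel_homeo_inverse[OF \<phi> g])
  have "homeomorphism (cball 0 1) (cball 0 1) (alexander_isotopy \<phi> t) (alexander_isotopy g t)"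
    by (intro homeomorphismI continuous maps \<phi> g' alexander_isotopy_inverse[OF \<phi> g]
        alexander_isotopy_inverse[OF g' homeomorphism_symD[OF g]])
  moreover obtain e where "0 < e" "e \<le> 1" and collar: "\<And>z. 1 - e < norm z \<Longrightarrow> norm z \<le> 1 \<Longrightarrow> \<phi> z = z"
    using rel_homeo_collarE[OF \<phi>] by blast
  moreover have "alexander_isotopy \<phi> t z = z" if "1 - e < norm z" for z
  proof (rule alexander_isotopy_fixes_collar[OF collar])
    have "t * (1 - e) \<le> 1 - e"
      using t \<open>e \<le> 1\<close> by (simp add: mult_left_le_one_le)
    then show "t * (1 - e) < norm z"
      using that by linarith
  qed
  ultimately show ?thesis
    unfolding rel_homeo_def by blast
qed

lemma disk_isotopy_alexander_isotopy:
  assumes \<phi>: "rel_homeo \<phi>"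
  shows "disk_isotopy (alexander_isotopy \<phi>) \<phi>"
  unfolding disk_isotopy_def
proof (intro conjI ballI)
  show "continuous_on ({0..1} \<times> cball 0 1) (\<lambda>(t, z). alexander_isotopy \<phi> t z)"
    by (rule continuous_on_alexander_isotopy[OF \<phi>])
  show "rel_homeo (alexander_isotopy \<phi> t)" if "t \<in> {0..1}" for t
    by (rule rel_homeo_alexander_isotopy[OF \<phi> that])
  fix z :: complex
  assume z: "z \<in> cball 0 1"
  show "alexander_isotopy \<phi> 0 z = z"
    by (simp add: alexander_isotopy_def)
  obtain e where "0 < e" "\<And>z. 1 - e < norm z \<Longrightarrow> norm z \<le> 1 \<Longrightarrow> \<phi> z = z"
    using rel_homeo_collarE[OF \<phi>] by blast
  then show "alexander_isotopy \<phi> 1 z = \<phi> z"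
    using z by (cases "norm z < 1") (auto simp: alexander_isotopy_def)
qed

lemma disk_isotopy_exists: "rel_homeo \<phi> \<Longrightarrow> \<exists>I. disk_isotopy I \<phi>"
  using disk_isotopy_alexander_isotopy by blast

lemma disk_isotopy_ball:
  "disk_isotopy I \<phi> \<Longrightarrow> t \<in> {0..1} \<Longrightarrow> z \<in> ball 0 1 \<Longrightarrow> I t z \<in> ball 0 1"
  unfolding disk_isotopy_def using rel_homeo_ball by blast

lemma disk_isotopy_inj_on: "disk_isotopy I \<phi> \<Longrightarrow> t \<in> {0..1} \<Longrightarrow> inj_on (I t) (cball 0 1)"
  unfolding disk_isotopy_def using rel_homeo_inj_on by blast

lemma disk_isotopy_cong:
  "disk_isotopy I \<phi> \<Longrightarrow> (\<And>z. z \<in> cball 0 1 \<Longrightarrow> \<phi> z = \<psi> z) \<Longrightarrow> disk_isotopy I \<psi>"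
  unfolding disk_isotopy_def by simp

lemma continuous_on_disk_isotopy_compose:
  assumes "disk_isotopy I \<phi>"
    and "continuous_on T a" "a ` T \<subseteq> {0..1}" "continuous_on T b" "b ` T \<subseteq> cball 0 1"
  shows "continuous_on T (\<lambda>x. I (a x) (b x))"
proof -
  have "continuous_on T (\<lambda>x. (\<lambda>(t, z). I t z) (a x, b x))"
    by (rule continuous_on_compose2[of "{0..1} \<times> cball 0 1"])
      (use assms in \<open>auto simp: disk_isotopy_def intro!: continuous_intros\<close>)
  then show ?thesis
    by simp
qed

definition isotopy_join ::
    "(real \<Rightarrow> complex \<Rightarrow> complex) \<Rightarrow> (complex \<Rightarrow> complex) \<Rightarrow> (real \<Rightarrow> complex \<Rightarrow> complex)
      \<Rightarrow> real \<Rightarrow> complex \<Rightarrow> complex" where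
  "isotopy_join I \<phi> J t z = (if t \<le> 1/2 then I (2 * t) z else J (2 * t - 1) (\<phi> z))"

lemma disk_isotopy_join:
  assumes I: "disk_isotopy I \<phi>" and J: "disk_isotopy J \<psi>" and \<phi>: "rel_homeo \<phi>"
  shows "disk_isotopy (isotopy_join I \<phi> J) (\<psi> \<circ> \<phi>)"
  unfolding disk_isotopy_def
proof (intro conjI ballI)
  define S where "S = {0..1::real} \<times> cball (0::complex) 1"
  have "continuous_on S
      (\<lambda>x. if fst x \<le> 1/2 then I (2 * fst x) (snd x) else J (2 * fst x - 1) (\<phi> (snd x)))"
  proof (rule continuous_on_cases_le)
    show "continuous_on {x \<in> S. fst x \<le> 1/2} (\<lambda>x. I (2 * fst x) (snd x))"
      by (rule continuous_on_disk_isotopy_compose[OF I]) (auto simp: S_def intro!: continuous_intros)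
    show "continuous_on {x \<in> S. 1/2 \<le> fst x} (\<lambda>x. J (2 * fst x - 1) (\<phi> (snd x)))"
      by (rule continuous_on_disk_isotopy_compose[OF J])
        (use rel_homeo_cball[OF \<phi>] in \<open>auto simp: S_def intro!: continuous_intros
          continuous_on_compose2[OF rel_homeo_continuous_on[OF \<phi>]]\<close>)
    show "I (2 * fst x) (snd x) = J (2 * fst x - 1) (\<phi> (snd x))" if "x \<in> S" "fst x = 1/2" for x
    proof -
      have "2 * fst x = 1" "2 * fst x - 1 = 0"
        using that(2) by simp_all
      moreover have "snd x \<in> cball 0 1" "\<phi> (snd x) \<in> cball 0 1"
        using that(1) rel_homeo_cball[OF \<phi>] by (auto simp: S_def)
      ultimately show ?thesis
        using I J by (simp add: disk_isotopy_def)
    qed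
  qed (auto intro!: continuous_intros)
  then show "continuous_on ({0..1} \<times> cball 0 1) (\<lambda>(t, z). isotopy_join I \<phi> J t z)"
    by (simp add: S_def isotopy_join_def case_prod_beta)
  show "rel_homeo (isotopy_join I \<phi> J t)" if t: "t \<in> {0..1}" for t
  proof (cases "t \<le> 1/2")
    case True
    then have "isotopy_join I \<phi> J t = I (2 * t)"
      by (simp add: fun_eq_iff isotopy_join_def)
    then show ?thesis
      using I t True by (simp add: disk_isotopy_def)
  next
    case False
    then have "isotopy_join I \<phi> J t = J (2 * t - 1) \<circ> \<phi>"
      by (simp add: fun_eq_iff isotopy_join_def)
    then show ?thesis
      using J t False rel_homeo_compose[OF _ \<phi>] by (simp add: disk_isotopy_def)
  qed
  fix z :: complex
  assume "z \<in> cball 0 1"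
  then show "isotopy_join I \<phi> J 0 z = z" "isotopy_join I \<phi> J 1 z = (\<psi> \<circ> \<phi>) z"
    using I J rel_homeo_cball[OF \<phi>] by (auto simp: isotopy_join_def disk_isotopy_def)
qed

lemma disk_isotopy_reverse:
  assumes I: "disk_isotopy I \<phi>" and \<phi>: "rel_homeo \<phi>"
    and g: "homeomorphism (cball 0 1) (cball 0 1) \<phi> g"
  shows "disk_isotopy (\<lambda>t. I (1 - t) \<circ> g) g"
  unfolding disk_isotopy_def
proof (intro conjI ballI)
  have g': "rel_homeo g"
    by (rule rel_homeo_inverse[OF \<phi> g])
  have "continuous_on ({0..1} \<times> cball 0 1) (\<lambda>x. I (1 - fst x) (g (snd x)))"
    by (rule continuous_on_disk_isotopy_compose[OF I])
      (use rel_homeo_cball[OF g'] in \<open>auto intro!: continuous_intros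
        continuous_on_compose2[OF rel_homeo_continuous_on[OF g']]\<close>)
  then show "continuous_on ({0..1} \<times> cball 0 1) (\<lambda>(t, z). (I (1 - t) \<circ> g) z)"
    by (simp add: case_prod_beta)
  show "rel_homeo (I (1 - t) \<circ> g)" if "t \<in> {0..1}" for t
    using that I g' by (auto simp: disk_isotopy_def intro: rel_homeo_compose)
  fix z :: complex
  assume "z \<in> cball 0 1"
  then show "(I (1 - 0) \<circ> g) z = z" "(I (1 - 1) \<circ> g) z = g z"
    using I rel_homeo_cball[OF g'] homeomorphism_apply2[OF g] by (auto simp: disk_isotopy_def)
qed

section \<open>Path homotopies in topological spaces\<close>

text \<open>The library versions of these facts use \<^const>\<open>linepath\<close> and hence need a vector space;
  configurations \<open>nat \<Rightarrow> complex\<close> only form a topological space, so constant paths are used.\<close>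

lemma homotopic_paths_rinv_const:
  fixes p :: "real \<Rightarrow> 'a::topological_space"
  assumes "path p" "path_image p \<subseteq> S"
  shows "homotopic_paths S (p +++ reversepath p) (\<lambda>_. pathstart p)"
proof -
  have p: "continuous_on {0..1} p"
    using assms by (auto simp: path_def)
  let ?A = "{0..1} \<times> {0..1}"
  have "continuous_on ?A (\<lambda>x. ((\<lambda>t. p (fst x * t)) +++ reversepath (\<lambda>t. p (fst x * t))) (snd x))"
    unfolding joinpaths_def reversepath_def path_def
  proof (rule continuous_on_cases_le)
    show "continuous_on {x \<in> ?A. snd x \<le> 1/2} (\<lambda>t. p (fst t * (2 * snd t)))"
         "continuous_on {x \<in> ?A. 1/2 \<le> snd x} (\<lambda>t. p (fst t * (1 - (2 * snd t - 1))))"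
         "continuous_on ?A snd"
      by (intro continuous_on_compose2 [OF p] continuous_intros; auto simp: mult_le_one)+
  qed (auto simp: algebra_simps)
  then have "homotopic_paths S (\<lambda>_. pathstart p) (p +++ reversepath p)"
    using assms unfolding homotopic_paths_def homotopic_with_def
    by (intro exI[of _ "\<lambda>y. ((\<lambda>t. p (fst y * t)) +++ reversepath (\<lambda>t. p (fst y * t))) (snd y)"])
      (force simp: mult_le_one path_defs joinpaths_def reversepath_def)
  then show ?thesis
    by (rule homotopic_paths_sym)
qed

lemma homotopic_paths_lid_const:
  fixes p :: "real \<Rightarrow> 'a::topological_space"
  assumes "path p" "path_image p \<subseteq> S"
  shows "homotopic_paths S ((\<lambda>_. pathstart p) +++ p) p"
proof -
  have "continuous_on {0..1} (\<lambda>t::real. if t \<le> 1/2 then 0 else 2 * t - 1)"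
    by (rule continuous_on_cases_le) (auto intro!: continuous_intros)
  then have "homotopic_paths S p ((\<lambda>_. pathstart p) +++ p)"
    by (rule homotopic_paths_reparametrize[OF assms]) (auto simp: joinpaths_def pathstart_def)
  then show ?thesis
    by (rule homotopic_paths_sym)
qed

lemma homotopic_paths_linv_join:
  fixes r z :: "real \<Rightarrow> 'a::topological_space"
  assumes "path r" "path_image r \<subseteq> S" "path z" "path_image z \<subseteq> S" "pathstart z = pathfinish r"
  shows "homotopic_paths S (reversepath r +++ (r +++ z)) z"
proof -
  have "homotopic_paths S (reversepath r +++ (r +++ z)) ((reversepath r +++ r) +++ z)"
    by (rule homotopic_paths_assoc) (use assms in auto)
  also have "homotopic_paths S \<dots> ((\<lambda>_. pathfinish r) +++ z)"
    using homotopic_paths_rinv_const[of "reversepath r" S] assms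
    by (intro homotopic_paths_join) auto
  also have "homotopic_paths S \<dots> z"
    using homotopic_paths_lid_const[of z S] assms by simp
  finally show ?thesis .
qed

lemma homotopic_paths_rinv_join:
  fixes p z :: "real \<Rightarrow> 'a::topological_space"
  assumes "path p" "path_image p \<subseteq> S" "path z" "path_image z \<subseteq> S" "pathstart z = pathstart p"
  shows "homotopic_paths S (p +++ (reversepath p +++ z)) z"
  using homotopic_paths_linv_join[of "reversepath p" S z] assms by simp

lemma homotopic_paths_cancel_inner:
  fixes p q r z :: "real \<Rightarrow> 'a::topological_space"
  assumes "path p" "path_image p \<subseteq> S" "path q" "path_image q \<subseteq> S"
    and "path r" "path_image r \<subseteq> S" "path z" "path_image z \<subseteq> S"
    and "pathfinish p = pathstart q" "pathfinish q = pathfinish r" "pathstart z = pathfinish r"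
  shows "homotopic_paths S ((p +++ q +++ reversepath r) +++ (r +++ z)) (p +++ q +++ z)"
proof -
  have "homotopic_paths S ((p +++ q +++ reversepath r) +++ (r +++ z)) (p +++ (q +++ reversepath r) +++ (r +++ z))"
    by (rule homotopic_paths_sym, rule homotopic_paths_assoc) (use assms in \<open>auto simp: path_image_join\<close>)
  also have "homotopic_paths S \<dots> (p +++ q +++ reversepath r +++ (r +++ z))"
    by (intro homotopic_paths_join homotopic_paths_sym[OF homotopic_paths_assoc])
      (use assms in \<open>auto simp: path_image_join\<close>)
  also have "homotopic_paths S \<dots> (p +++ q +++ z)"
    by (intro homotopic_paths_join homotopic_paths_linv_join) (use assms in auto)
  finally show ?thesis .
qed

section \<open>Braids as loops in the configuration space\<close>

lemma continuous_on_tuple: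
  assumes "\<And>i. i < n \<Longrightarrow> continuous_on S (\<lambda>x. f x i)"
  shows "continuous_on S (\<lambda>x i. if i < n then f x i else (undefined :: 'a::topological_space))"
proof (rule continuous_on_coordinatewise_then_product)
  fix i
  show "continuous_on S (\<lambda>x. if i < n then f x i else undefined)"
    using assms by (cases "i < n") auto
qed

definition disk_tuples :: "nat \<Rightarrow> (nat \<Rightarrow> complex) set" where
  "disk_tuples n = PiE {..<n} (\<lambda>_. cball 0 1)"

lemma jmap_disk_tuples:
  assumes "rel_homeo \<phi>" "P \<in> disk_tuples n"
  shows "jmap n \<phi> P \<in> disk_tuples n"
  using assms(2) rel_homeo_cball[OF assms(1)]
  by (auto simp: disk_tuples_def jmap_def PiE_iff extensional_def simp del: mem_cball_0)

definition config_linepath ::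
    "nat \<Rightarrow> (nat \<Rightarrow> complex) \<Rightarrow> (nat \<Rightarrow> complex) \<Rightarrow> real \<Rightarrow> nat \<Rightarrow> complex" where
  "config_linepath n x y t = (\<lambda>i. if i < n then (1 - t) *\<^sub>R x i + t *\<^sub>R y i else undefined)"

definition isotopy_trace ::
    "nat \<Rightarrow> (real \<Rightarrow> complex \<Rightarrow> complex) \<Rightarrow> (nat \<Rightarrow> complex) \<Rightarrow> real \<Rightarrow> nat \<Rightarrow> complex" where
  "isotopy_trace n I P t = (\<lambda>i. if i < n then I t (P i) else undefined)"

lemma path_config_linepath: "path (config_linepath n x y)"
  unfolding path_def config_linepath_def by (intro continuous_on_tuple continuous_intros)

lemma pathfinish_config_linepath: "pathfinish (config_linepath n x y) = restrict y {..<n}"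
  by (simp add: pathfinish_def config_linepath_def restrict_def fun_eq_iff)

lemma path_image_config_linepath_subset_Conf:
  assumes "\<forall>i<n. x i \<in> ball 0 1" "\<forall>i<n. y i \<in> ball 0 1"
    and "\<forall>i<n. \<forall>j<n. i \<noteq> j \<longrightarrow>
           (\<forall>s\<in>{0..1}. (1 - s) *\<^sub>R x i + s *\<^sub>R y i \<noteq> (1 - s) *\<^sub>R x j + s *\<^sub>R y j)"
  shows "path_image (config_linepath n x y) \<subseteq> Conf n"
proof -
  have "(1 - s) *\<^sub>R x i + s *\<^sub>R y i \<in> ball 0 1" if "s \<in> {0..1}" "i < n" for s i
    using assms(1,2) that by (intro convexD[OF convex_ball]) auto
  then show ?thesis
    using assms(3) by (auto simp: path_image_def Conf_def config_linepath_def)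
qed

lemma path_isotopy_trace:
  assumes "disk_isotopy I \<phi>" "\<forall>i<n. P i \<in> cball 0 1"
  shows "path (isotopy_trace n I P)"
  unfolding path_def isotopy_trace_def
  by (intro continuous_on_tuple continuous_on_disk_isotopy_compose[OF assms(1)])
    (use assms(2) in \<open>auto intro!: continuous_intros\<close>)

lemma path_image_isotopy_trace_subset_Conf:
  assumes I: "disk_isotopy I \<phi>" and "\<forall>i<n. P i \<in> ball 0 1" "\<forall>i<n. \<forall>j<n. i \<noteq> j \<longrightarrow> P i \<noteq> P j"
  shows "path_image (isotopy_trace n I P) \<subseteq> Conf n"
proof -
  have "I t (P i) \<in> ball 0 1" if "t \<in> {0..1}" "i < n" for t i
    using disk_isotopy_ball[OF I] assms(2) that by blast
  moreover have "I t (P i) \<noteq> I t (P j)" if "t \<in> {0..1}" "i < n" "j < n" "i \<noteq> j" for t i j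
  proof -
    have "P i \<in> cball 0 1" "P j \<in> cball 0 1" "P i \<noteq> P j"
      using assms(2,3) that by auto
    then show ?thesis
      using inj_onD[OF disk_isotopy_inj_on[OF I that(1)]] by blast
  qed
  ultimately show ?thesis
    by (auto simp: path_image_def Conf_def isotopy_trace_def)
qed

lemma pathstart_isotopy_trace:
  "disk_isotopy I \<phi> \<Longrightarrow> P \<in> disk_tuples n \<Longrightarrow> pathstart (isotopy_trace n I P) = P"
  by (auto simp: pathstart_def isotopy_trace_def disk_isotopy_def disk_tuples_def fun_eq_iff PiE_iff
      extensional_def)

lemma pathfinish_isotopy_trace:
  "disk_isotopy I \<phi> \<Longrightarrow> \<forall>i<n. P i \<in> cball 0 1 \<Longrightarrow> pathfinish (isotopy_trace n I P) = jmap n \<phi> P"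
  by (auto simp: pathfinish_def isotopy_trace_def disk_isotopy_def jmap_def fun_eq_iff)

lemma isotopy_trace_join:
  "isotopy_trace n (isotopy_join I \<phi> J) P = isotopy_trace n I P +++ isotopy_trace n J (jmap n \<phi> P)"
  by (simp add: isotopy_trace_def isotopy_join_def joinpaths_def jmap_def fun_eq_iff)

lemma isotopy_trace_join_reverse:
  assumes "\<forall>i<n. g (\<phi> (P i)) = P i"
  shows "isotopy_trace n (isotopy_join (\<lambda>t. I (1 - t) \<circ> g) g K) (jmap n \<phi> P)
           = reversepath (isotopy_trace n I P) +++ isotopy_trace n K P"
  using assms
  by (simp add: isotopy_trace_def isotopy_join_def joinpaths_def reversepath_def jmap_def fun_eq_iff)

text \<open>Sends the thirds of \<open>[0, 1]\<close> on which \<^const>\<open>braid_path\<close> runs its three pieces to the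
  intervals \<open>[0, 1/2]\<close>, \<open>[1/2, 3/4]\<close>, \<open>[3/4, 1]\<close> of a right-nested join of three paths.\<close>

definition braid_reparam :: "real \<Rightarrow> real" where
  "braid_reparam t =
     (if t \<le> 1/3 then 3 * t / 2 else if t \<le> 2/3 then 1/2 + (3 * t - 1) / 4 else 3/4 + (3 * t - 2) / 4)"

lemma continuous_on_braid_reparam: "continuous_on {0..1} braid_reparam"
  unfolding braid_reparam_def
  by (intro continuous_on_cases_le continuous_intros) (auto simp: field_simps)

lemma braid_path_reparam:
  assumes "t \<in> {0..1}"
  shows "braid_path n q P I \<phi> t
           = (config_linepath n q P +++ isotopy_trace n I P +++ reversepath (config_linepath n q (jmap n \<phi> P)))
               (braid_reparam t)"
proof -
  consider "t \<le> 1/3" | "1/3 < t" "t \<le> 2/3" | "2/3 < t"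
    by linarith
  then show ?thesis
  proof cases
    case 1
    then have r: "braid_reparam t = 3 * t / 2" and "3 * t / 2 \<le> 1/2"
      by (auto simp: braid_reparam_def)
    show ?thesis
      unfolding r joinpaths_def braid_path_def config_linepath_def
      by (simp only: if_P[OF 1] if_P[OF \<open>3 * t / 2 \<le> 1/2\<close>]) (simp add: fun_eq_iff)
  next
    case 2
    define u where "u = 1/2 + (3 * t - 1) / 4"
    have r: "braid_reparam t = u"
      using 2 by (simp add: braid_reparam_def u_def)
    have u: "\<not> u \<le> 1/2" "2 * u - 1 \<le> 1/2" "2 * (2 * u - 1) = 3 * t - 1"
      using 2 by (auto simp: u_def field_simps)
    show ?thesis
      unfolding r joinpaths_def braid_path_def isotopy_trace_def
      using 2 u by (simp only: if_not_P if_P) simp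
  next
    case 3
    define u where "u = 3/4 + (3 * t - 2) / 4"
    have r: "braid_reparam t = u"
      using 3 by (simp add: braid_reparam_def u_def)
    have u: "\<not> u \<le> 1/2" "\<not> 2 * u - 1 \<le> 1/2" "1 - (2 * (2 * u - 1) - 1) = 1 - (3 * t - 2)"
      using 3 by (auto simp: u_def field_simps)
    have t: "\<not> t \<le> 1/3" "\<not> t \<le> 2/3"
      using 3 by auto
    show ?thesis
      unfolding r joinpaths_def braid_path_def reversepath_def config_linepath_def jmap_def
      by (simp only: if_not_P[OF t(1)] if_not_P[OF t(2)] if_not_P[OF u(1)] if_not_P[OF u(2)] u(3))
        (simp add: fun_eq_iff algebra_simps)
  qed
qed

lemma Omega_subset_disk_tuples: "Omega n q \<subseteq> disk_tuples n"
  by (auto simp: Omega_def disk_tuples_def)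

lemma Omega_distinct: "P \<in> Omega n q \<Longrightarrow> i < n \<Longrightarrow> j < n \<Longrightarrow> i \<noteq> j \<Longrightarrow> P i \<noteq> P j"
  unfolding Omega_def by (fastforce dest: bspec[of _ _ 1])

lemma base_points_ball: "base_points n q \<Longrightarrow> i < n \<Longrightarrow> q i \<in> ball 0 1"
  unfolding base_points_def by blast

lemma path_image_config_linepath_Omega:
  assumes q: "base_points n q" and Y: "Y \<in> Omega n q" "\<forall>i<n. Y i \<in> ball 0 1"
  shows "path_image (config_linepath n q Y) \<subseteq> Conf n"
  by (rule path_image_config_linepath_subset_Conf)
    (use base_points_ball[OF q] Y in \<open>auto simp: Omega_def\<close>)

text \<open>Exactly the condition under which \<^const>\<open>beta\<close> is defined: distinctness of the points is
  implied by \<^const>\<open>Omega\<close>.\<close>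

definition admissible ::
    "nat \<Rightarrow> (nat \<Rightarrow> complex) \<Rightarrow> (complex \<Rightarrow> complex) \<Rightarrow> (nat \<Rightarrow> complex) \<Rightarrow> bool" where
  "admissible n q \<phi> P \<longleftrightarrow> P \<in> Omega n q \<and> jmap n \<phi> P \<in> Omega n q \<and> (\<forall>i<n. P i \<in> ball 0 1)"

lemma beta_admissible:
  "admissible n q \<phi> P \<Longrightarrow>
    beta n q P \<phi> = {h. \<exists>I. disk_isotopy I \<phi> \<and> homotopic_paths (Conf n) (braid_path n q P I \<phi>) h}"
  using Omega_distinct by (auto simp: beta_def admissible_def braid_class_def)

lemma beta_not_admissible: "\<not> admissible n q \<phi> P \<Longrightarrow> beta n q P \<phi> = {}"
  by (auto simp: beta_def admissible_def)

lemma admissible_pieces: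
  assumes q: "base_points n q" and I: "disk_isotopy I \<phi>" and \<phi>: "rel_homeo \<phi>"
    and P: "admissible n q \<phi> P"
  shows "path_image (config_linepath n q P) \<subseteq> Conf n" "pathfinish (config_linepath n q P) = P"
    and "path (isotopy_trace n I P)" "path_image (isotopy_trace n I P) \<subseteq> Conf n"
    and "pathstart (isotopy_trace n I P) = P" "pathfinish (isotopy_trace n I P) = jmap n \<phi> P"
    and "path_image (config_linepath n q (jmap n \<phi> P)) \<subseteq> Conf n"
    and "pathfinish (config_linepath n q (jmap n \<phi> P)) = jmap n \<phi> P"
proof -
  have P\<Omega>: "P \<in> Omega n q" "jmap n \<phi> P \<in> Omega n q" and ball: "\<forall>i<n. P i \<in> ball 0 1"
    using P by (auto simp: admissible_def)
  then have disk: "P \<in> disk_tuples n" "jmap n \<phi> P \<in> disk_tuples n"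
    using Omega_subset_disk_tuples by blast+
  have cball: "\<forall>i<n. P i \<in> cball 0 1"
    using ball by auto
  show "path_image (config_linepath n q P) \<subseteq> Conf n"
    by (rule path_image_config_linepath_Omega[OF q P\<Omega>(1) ball])
  show "path_image (config_linepath n q (jmap n \<phi> P)) \<subseteq> Conf n"
    by (rule path_image_config_linepath_Omega[OF q P\<Omega>(2)])
      (use ball rel_homeo_ball[OF \<phi>] in \<open>simp add: jmap_def\<close>)
  show "pathfinish (config_linepath n q P) = P" "pathfinish (config_linepath n q (jmap n \<phi> P)) = jmap n \<phi> P"
    using disk by (simp_all add: pathfinish_config_linepath disk_tuples_def)
  show "path (isotopy_trace n I P)"
    by (rule path_isotopy_trace[OF I cball])
  show "path_image (isotopy_trace n I P) \<subseteq> Conf n"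
    using path_image_isotopy_trace_subset_Conf[OF I ball] Omega_distinct[OF P\<Omega>(1)] by blast
  show "pathstart (isotopy_trace n I P) = P" "pathfinish (isotopy_trace n I P) = jmap n \<phi> P"
    using pathstart_isotopy_trace[OF I disk(1)] pathfinish_isotopy_trace[OF I cball] by auto
qed

lemma homotopic_braid_path_pieces:
  assumes q: "base_points n q" and I: "disk_isotopy I \<phi>" and \<phi>: "rel_homeo \<phi>"
    and P: "admissible n q \<phi> P"
  shows "homotopic_paths (Conf n) (braid_path n q P I \<phi>)
           (config_linepath n q P +++ isotopy_trace n I P +++ reversepath (config_linepath n q (jmap n \<phi> P)))"
proof (rule homotopic_paths_sym, rule homotopic_paths_reparametrize)
  note pieces = admissible_pieces[OF assms]
  show "path (config_linepath n q P +++ isotopy_trace n I P +++ reversepath (config_linepath n q (jmap n \<phi> P)))"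
    using pieces by (simp add: path_config_linepath)
  show "path_image (config_linepath n q P +++ isotopy_trace n I P +++ reversepath (config_linepath n q (jmap n \<phi> P)))
          \<subseteq> Conf n"
    using pieces by (simp add: path_image_join)
  show "braid_reparam \<in> {0..1} \<rightarrow> {0..1}" "braid_reparam 0 = 0" "braid_reparam 1 = 1"
    by (auto simp: braid_reparam_def field_simps)
qed (simp_all add: continuous_on_braid_reparam braid_path_reparam)

lemma braid_path_0_1:
  "braid_path n q P I \<phi> 0 = restrict q {..<n}" "braid_path n q P I \<phi> 1 = restrict q {..<n}"
  by (simp_all add: braid_path_def fun_eq_iff)

lemma braid_path_endpoints:
  "pathstart (braid_path n q P I \<phi>) = restrict q {..<n}"
  "pathfinish (braid_path n q P I \<phi>) = restrict q {..<n}"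
  by (simp_all add: pathstart_def pathfinish_def braid_path_0_1)

lemma braid_path_in_Conf:
  assumes "base_points n q" "disk_isotopy I \<phi>" "rel_homeo \<phi>" "admissible n q \<phi> P"
  shows "path (braid_path n q P I \<phi>)" "path_image (braid_path n q P I \<phi>) \<subseteq> Conf n"
  using homotopic_braid_path_pieces[OF assms] homotopic_paths_imp_path homotopic_paths_imp_subset
  by blast+

lemma jmap_jmap: "jmap n \<psi> (jmap n \<phi> P) = jmap n (\<psi> \<circ> \<phi>) P"
  by (simp add: jmap_def fun_eq_iff)

section \<open>The cocycle identity\<close>

lemma disk_isotopy_factor:
  assumes I: "disk_isotopy I \<phi>" and \<phi>: "rel_homeo \<phi>" and K: "disk_isotopy K (\<psi> \<circ> \<phi>)"
    and P: "\<forall>i<n. P i \<in> cball 0 1"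
  obtains J where "disk_isotopy J \<psi>"
    "isotopy_trace n J (jmap n \<phi> P) = reversepath (isotopy_trace n I P) +++ isotopy_trace n K P"
proof -
  obtain g where g: "homeomorphism (cball 0 1) (cball 0 1) \<phi> g"
    using rel_homeo_homeomorphismE[OF \<phi>] by blast
  \<comment> \<open>undo \<open>I\<close>, then run \<open>K\<close>: an isotopy from the identity to \<open>\<psi> = (\<psi> \<circ> \<phi>) \<circ> g\<close>\<close>
  let ?J = "isotopy_join (\<lambda>t. I (1 - t) \<circ> g) g K"
  have "disk_isotopy ?J \<psi>"
    by (rule disk_isotopy_cong[OF disk_isotopy_join[OF disk_isotopy_reverse[OF I \<phi> g] K
          rel_homeo_inverse[OF \<phi> g]]])
      (simp add: homeomorphism_apply2[OF g])
  moreover have "\<forall>i<n. g (\<phi> (P i)) = P i"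
    using homeomorphism_apply1[OF g] P by auto
  then have "isotopy_trace n ?J (jmap n \<phi> P) = reversepath (isotopy_trace n I P) +++ isotopy_trace n K P"
    by (rule isotopy_trace_join_reverse)
  ultimately show thesis
    by (rule that)
qed

lemma homotopic_braid_path_join:
  assumes q: "base_points n q" and \<phi>: "rel_homeo \<phi>" and \<psi>: "rel_homeo \<psi>"
    and P: "admissible n q \<phi> P" "admissible n q \<psi> (jmap n \<phi> P)"
    and I: "disk_isotopy I \<phi>" and J: "disk_isotopy J \<psi>"
  shows "homotopic_paths (Conf n) (braid_path n q P I \<phi> +++ braid_path n q (jmap n \<phi> P) J \<psi>)
           (config_linepath n q P +++ (isotopy_trace n I P +++ isotopy_trace n J (jmap n \<phi> P))
              +++ reversepath (config_linepath n q (jmap n (\<psi> \<circ> \<phi>) P)))"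
    (is "homotopic_paths _ _ (?A +++ (?X +++ ?Y) +++ ?C)")
proof -
  let ?B = "config_linepath n q (jmap n \<phi> P)"
  note p1 = admissible_pieces[OF q I \<phi> P(1)] and p2 = admissible_pieces[OF q J \<psi> P(2), unfolded jmap_jmap]
  have "homotopic_paths (Conf n) (braid_path n q P I \<phi> +++ braid_path n q (jmap n \<phi> P) J \<psi>)
      ((?A +++ ?X +++ reversepath ?B) +++ (?B +++ ?Y +++ ?C))"
    using homotopic_braid_path_pieces[OF q I \<phi> P(1)] homotopic_braid_path_pieces[OF q J \<psi> P(2)]
    by (intro homotopic_paths_join) (simp_all add: braid_path_endpoints jmap_jmap)
  \<comment> \<open>the segments returning from \<open>jmap n \<phi> P\<close> cancel against those leaving for it\<close>
  also have "homotopic_paths (Conf n) \<dots> (?A +++ ?X +++ ?Y +++ ?C)"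
    by (rule homotopic_paths_cancel_inner)
      (use p1 p2 in \<open>simp_all add: path_config_linepath path_image_join pathfinish_config_linepath\<close>)
  also have "homotopic_paths (Conf n) \<dots> (?A +++ (?X +++ ?Y) +++ ?C)"
    by (intro homotopic_paths_join homotopic_paths_assoc)
      (use p1 p2 in \<open>simp_all add: path_config_linepath homotopic_paths_refl\<close>)
  finally show ?thesis .
qed

lemma braid_mult_beta_subset:
  assumes q: "base_points n q" and \<phi>: "rel_homeo \<phi>" and \<psi>: "rel_homeo \<psi>"
    and P: "admissible n q \<phi> P" "admissible n q \<psi> (jmap n \<phi> P)" "admissible n q (\<psi> \<circ> \<phi>) P"
  shows "braid_mult n (beta n q P \<phi>) (beta n q (jmap n \<phi> P) \<psi>) \<subseteq> beta n q P (\<psi> \<circ> \<phi>)"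
proof
  fix k
  assume "k \<in> braid_mult n (beta n q P \<phi>) (beta n q (jmap n \<phi> P) \<psi>)"
  then obtain a b where a: "a \<in> beta n q P \<phi>" and b: "b \<in> beta n q (jmap n \<phi> P) \<psi>"
    and k: "homotopic_paths (Conf n) k (a +++ b)"
    unfolding braid_mult_def by blast
  obtain I where I: "disk_isotopy I \<phi>" and a: "homotopic_paths (Conf n) (braid_path n q P I \<phi>) a"
    using a beta_admissible[OF P(1)] by blast
  obtain J where J: "disk_isotopy J \<psi>"
    and b: "homotopic_paths (Conf n) (braid_path n q (jmap n \<phi> P) J \<psi>) b"
    using b beta_admissible[OF P(2)] by blast
  have K: "disk_isotopy (isotopy_join I \<phi> J) (\<psi> \<circ> \<phi>)"
    by (rule disk_isotopy_join[OF I J \<phi>])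
  let ?A = "config_linepath n q P" and ?C = "reversepath (config_linepath n q (jmap n (\<psi> \<circ> \<phi>) P))"
  have "homotopic_paths (Conf n) (braid_path n q P (isotopy_join I \<phi> J) (\<psi> \<circ> \<phi>))
      (?A +++ isotopy_trace n (isotopy_join I \<phi> J) P +++ ?C)"
    by (rule homotopic_braid_path_pieces[OF q K rel_homeo_compose[OF \<psi> \<phi>] P(3)])
  also have "\<dots> = ?A +++ (isotopy_trace n I P +++ isotopy_trace n J (jmap n \<phi> P)) +++ ?C"
    by (simp only: isotopy_trace_join)
  also have "homotopic_paths (Conf n) \<dots> (braid_path n q P I \<phi> +++ braid_path n q (jmap n \<phi> P) J \<psi>)"
    by (rule homotopic_paths_sym[OF homotopic_braid_path_join[OF q \<phi> \<psi> P(1,2) I J]])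
  also have "homotopic_paths (Conf n) \<dots> (a +++ b)"
    by (rule homotopic_paths_join[OF a b]) (simp add: braid_path_endpoints)
  also have "homotopic_paths (Conf n) \<dots> k"
    by (rule homotopic_paths_sym[OF k])
  finally show "k \<in> beta n q P (\<psi> \<circ> \<phi>)"
    using beta_admissible[OF P(3)] K by blast
qed

lemma beta_subset_braid_mult:
  assumes q: "base_points n q" and \<phi>: "rel_homeo \<phi>" and \<psi>: "rel_homeo \<psi>"
    and P: "admissible n q \<phi> P" "admissible n q \<psi> (jmap n \<phi> P)" "admissible n q (\<psi> \<circ> \<phi>) P"
  shows "beta n q P (\<psi> \<circ> \<phi>) \<subseteq> braid_mult n (beta n q P \<phi>) (beta n q (jmap n \<phi> P) \<psi>)"
proof
  fix h
  assume "h \<in> beta n q P (\<psi> \<circ> \<phi>)"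
  then obtain K where K: "disk_isotopy K (\<psi> \<circ> \<phi>)"
    and h: "homotopic_paths (Conf n) (braid_path n q P K (\<psi> \<circ> \<phi>)) h"
    using beta_admissible[OF P(3)] by blast
  obtain I where I: "disk_isotopy I \<phi>"
    using disk_isotopy_exists[OF \<phi>] by blast
  have "\<forall>i<n. P i \<in> cball 0 1"
    using P(1) by (auto simp: admissible_def)
  then obtain J where J: "disk_isotopy J \<psi>"
    and J_trace: "isotopy_trace n J (jmap n \<phi> P) = reversepath (isotopy_trace n I P) +++ isotopy_trace n K P"
    using disk_isotopy_factor[OF I \<phi> K] by blast
  have \<psi>\<phi>: "rel_homeo (\<psi> \<circ> \<phi>)"
    by (rule rel_homeo_compose[OF \<psi> \<phi>])
  note pI = admissible_pieces[OF q I \<phi> P(1)] and pK = admissible_pieces[OF q K \<psi>\<phi> P(3)]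
  let ?A = "config_linepath n q P" and ?C = "reversepath (config_linepath n q (jmap n (\<psi> \<circ> \<phi>) P))"
  have "homotopic_paths (Conf n) (braid_path n q P I \<phi> +++ braid_path n q (jmap n \<phi> P) J \<psi>)
      (?A +++ (isotopy_trace n I P +++ (reversepath (isotopy_trace n I P) +++ isotopy_trace n K P)) +++ ?C)"
    using homotopic_braid_path_join[OF q \<phi> \<psi> P(1,2) I J] unfolding J_trace .
  also have "homotopic_paths (Conf n) \<dots> (?A +++ isotopy_trace n K P +++ ?C)"
    by (intro homotopic_paths_join homotopic_paths_rinv_join)
      (use pI pK in \<open>simp_all add: path_config_linepath homotopic_paths_refl\<close>)
  also have "homotopic_paths (Conf n) \<dots> (braid_path n q P K (\<psi> \<circ> \<phi>))"
    by (rule homotopic_paths_sym[OF homotopic_braid_path_pieces[OF q K \<psi>\<phi> P(3)]])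
  also have "homotopic_paths (Conf n) \<dots> h"
    by (rule h)
  finally have "homotopic_paths (Conf n) h (braid_path n q P I \<phi> +++ braid_path n q (jmap n \<phi> P) J \<psi>)"
    by (rule homotopic_paths_sym)
  moreover have "braid_path n q P I \<phi> \<in> beta n q P \<phi>"
    using beta_admissible[OF P(1)] I braid_path_in_Conf[OF q I \<phi> P(1)] by (auto simp: homotopic_paths_refl)
  moreover have "braid_path n q (jmap n \<phi> P) J \<psi> \<in> beta n q (jmap n \<phi> P) \<psi>"
    using beta_admissible[OF P(2)] J braid_path_in_Conf[OF q J \<psi> P(2)] by (auto simp: homotopic_paths_refl)
  ultimately show "h \<in> braid_mult n (beta n q P \<phi>) (beta n q (jmap n \<phi> P) \<psi>)"
    unfolding braid_mult_def by blast
qed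

lemma beta_cocycle:
  assumes q: "base_points n q" and \<phi>: "rel_homeo \<phi>" and \<psi>: "rel_homeo \<psi>"
    and \<Omega>: "P \<in> Omega n q" "jmap n \<phi> P \<in> Omega n q" "jmap n (\<psi> \<circ> \<phi>) P \<in> Omega n q"
    and ball: "\<forall>i<n. P i \<in> ball 0 1"
  shows "beta n q P (\<psi> \<circ> \<phi>) = braid_mult n (beta n q P \<phi>) (beta n q (jmap n \<phi> P) \<psi>)"
proof -
  have "admissible n q \<phi> P" "admissible n q \<psi> (jmap n \<phi> P)" "admissible n q (\<psi> \<circ> \<phi>) P"
    unfolding admissible_def jmap_jmap using \<Omega> ball rel_homeo_ball[OF \<phi>] by (auto simp: jmap_def)
  then show ?thesis
    using beta_subset_braid_mult[OF q \<phi> \<psi>] braid_mult_beta_subset[OF q \<phi> \<psi>] by blast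
qed

section \<open>Measure preservation\<close>

lemma preserves_compose: "preserves \<phi> M \<Longrightarrow> preserves \<psi> M \<Longrightarrow> preserves (\<psi> \<circ> \<phi>) M"
  unfolding preserves_def by (metis distr_distr measurable_comp)

lemma jmap_eq_compose: "jmap n \<phi> = compose {..<n} \<phi>"
  by (simp add: jmap_def compose_def restrict_def fun_eq_iff)

lemma measurable_jmap:
  assumes "\<And>i. i < n \<Longrightarrow> \<phi> \<in> M i \<rightarrow>\<^sub>M M i"
  shows "jmap n \<phi> \<in> PiM {..<n} M \<rightarrow>\<^sub>M PiM {..<n} M"
  unfolding jmap_eq_compose compose_def
  by (rule measurable_restrict) (use assms in \<open>auto intro: measurable_compose[OF measurable_component_singleton]\<close>)

lemma AE_jmap:
  assumes "\<And>i. i < n \<Longrightarrow> prob_space (M i)" and "\<And>i. i < n \<Longrightarrow> preserves \<phi> (M i)"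
    and "AE P in PiM {..<n} M. Q P"
  shows "AE P in PiM {..<n} M. Q (jmap n \<phi> P)"
proof -
  have \<phi>: "\<And>i. i < n \<Longrightarrow> \<phi> \<in> M i \<rightarrow>\<^sub>M M i"
    using assms(2) by (simp add: preserves_def)
  have "distr (PiM {..<n} M) (PiM {..<n} M) (jmap n \<phi>) = PiM {..<n} (\<lambda>i. distr (M i) (M i) \<phi>)"
    unfolding jmap_eq_compose by (rule distr_PiM_finite_prob_space') (use assms(1) \<phi> in auto)
  also have "\<dots> = PiM {..<n} M"
    using assms(2) by (intro PiM_cong) (simp_all add: preserves_def)
  finally have distr_eq: "distr (PiM {..<n} M) (PiM {..<n} M) (jmap n \<phi>) = PiM {..<n} M" .
  have "AE P in distr (PiM {..<n} M) (PiM {..<n} M) (jmap n \<phi>). Q P"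
    unfolding distr_eq by (rule assms(3))
  from AE_distrD[OF measurable_jmap[OF \<phi>] this] show ?thesis .
qed

section \<open>Local constancy and measurability of \<^const>\<open>beta\<close>\<close>

lemma open_Collect_ball_compact:
  assumes "compact K" "open W"
  shows "open {x. \<forall>s\<in>K. (x, s) \<in> W}"
proof (subst open_subopen, intro ballI)
  fix x
  assume "x \<in> {x. \<forall>s\<in>K. (x, s) \<in> W}"
  then have "{x} \<times> K \<subseteq> W"
    by auto
  then obtain X0 where "x \<in> X0" "open X0" "X0 \<times> K \<subseteq> W"
    using Elementary_Topology.tube_lemma[OF assms] by blast
  then show "\<exists>T. open T \<and> x \<in> T \<and> T \<subseteq> {x. \<forall>s\<in>K. (x, s) \<in> W}"
    by blast
qed

lemma open_Collect_segment_avoids_zero: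
  fixes a :: "'a::real_normed_vector"
  shows "open {y. \<forall>s\<in>{0..1}. (1 - s) *\<^sub>R a + s *\<^sub>R y \<noteq> 0}"
proof -
  have "open {p :: 'a \<times> real. (1 - snd p) *\<^sub>R a + snd p *\<^sub>R fst p \<noteq> 0}"
    by (intro open_Collect_neq continuous_intros)
  from open_Collect_ball_compact[OF compact_Icc this] show ?thesis
    by simp
qed

text \<open>Neighbourhoods of \<open>P\<close> in \<open>disk_tuples n\<close> for the product topology, which only involves
  the coordinates below \<open>n\<close>.\<close>

definition config_nhds :: "nat \<Rightarrow> (nat \<Rightarrow> complex) \<Rightarrow> (nat \<Rightarrow> complex) filter" where
  "config_nhds n P = (INF e\<in>{0<..}. principal {P' \<in> disk_tuples n. \<forall>i<n. dist (P' i) (P i) < e})"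

lemma eventually_config_nhds:
  "eventually Q (config_nhds n P) \<longleftrightarrow>
    (\<exists>e>0. \<forall>P'\<in>disk_tuples n. (\<forall>i<n. dist (P' i) (P i) < e) \<longrightarrow> Q P')"
  unfolding config_nhds_def
proof (subst eventually_INF_base)
  fix a b :: real
  assume "a \<in> {0<..}" "b \<in> {0<..}"
  then show "\<exists>x\<in>{0<..}. principal {P' \<in> disk_tuples n. \<forall>i<n. dist (P' i) (P i) < x}
      \<le> inf (principal {P' \<in> disk_tuples n. \<forall>i<n. dist (P' i) (P i) < a})
            (principal {P' \<in> disk_tuples n. \<forall>i<n. dist (P' i) (P i) < b})"
    by (intro bexI[of _ "min a b"]) auto
qed (auto simp: eventually_principal)

lemma eventually_config_nhds_disk_tuples: "eventually (\<lambda>P'. P' \<in> disk_tuples n) (config_nhds n P)"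
  unfolding eventually_config_nhds by (auto intro: exI[of _ 1])

lemma tendsto_config_nhds_component:
  fixes F :: "complex \<Rightarrow> 'a::metric_space"
  assumes F: "continuous_on (cball 0 1) F" and i: "i < n" "P i \<in> cball 0 1"
  shows "((\<lambda>P'. F (P' i)) \<longlongrightarrow> F (P i)) (config_nhds n P)"
proof (rule tendstoI)
  fix m :: real
  assume "m > 0"
  then obtain d where "d > 0" and d: "\<forall>z\<in>cball 0 1. dist z (P i) < d \<longrightarrow> dist (F z) (F (P i)) < m"
    using F i(2) unfolding continuous_on_iff by blast
  then show "eventually (\<lambda>P'. dist (F (P' i)) (F (P i)) < m) (config_nhds n P)"
    unfolding eventually_config_nhds using i(1) by (intro exI[of _ d]) (auto simp: disk_tuples_def PiE_iff)
qed

lemma segment_points_neq_iff: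
  fixes a b c d :: "'a::real_vector"
  shows "(1 - s) *\<^sub>R a + s *\<^sub>R b \<noteq> (1 - s) *\<^sub>R c + s *\<^sub>R d \<longleftrightarrow>
    (1 - s) *\<^sub>R (a - c) + s *\<^sub>R (b - d) \<noteq> 0"
proof -
  have "(1 - s) *\<^sub>R a + s *\<^sub>R b - ((1 - s) *\<^sub>R c + s *\<^sub>R d) = (1 - s) *\<^sub>R (a - c) + s *\<^sub>R (b - d)"
    by (simp add: algebra_simps)
  then show ?thesis
    by (metis eq_iff_diff_eq_0)
qed

lemma eventually_in_Omega:
  assumes Y0: "Y0 \<in> Omega n q" and lim: "\<And>i. i < n \<Longrightarrow> ((\<lambda>x. Y x i) \<longlongrightarrow> Y0 i) F"
    and Y: "eventually (\<lambda>x. Y x \<in> disk_tuples n) F"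
  shows "eventually (\<lambda>x. Y x \<in> Omega n q) F"
proof -
  have pair: "eventually (\<lambda>x. \<forall>s\<in>{0..1}. (1 - s) *\<^sub>R q i + s *\<^sub>R Y x i \<noteq> (1 - s) *\<^sub>R q j + s *\<^sub>R Y x j) F"
    if "i < n" "j < n" "i \<noteq> j" for i j
  proof -
    let ?U = "{y. \<forall>s\<in>{0..1}. (1 - s) *\<^sub>R (q i - q j) + s *\<^sub>R y \<noteq> 0}"
    have "((\<lambda>x. Y x i - Y x j) \<longlongrightarrow> Y0 i - Y0 j) F"
      using lim that by (intro tendsto_diff)
    moreover have "Y0 i - Y0 j \<in> ?U"
      using Y0 that by (simp add: Omega_def segment_points_neq_iff[symmetric])
    ultimately have "eventually (\<lambda>x. Y x i - Y x j \<in> ?U) F"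
      by (rule topological_tendstoD[OF _ open_Collect_segment_avoids_zero])
    then show ?thesis
      by (rule eventually_mono) (simp add: segment_points_neq_iff)
  qed
  have "eventually (\<lambda>x. \<forall>i\<in>{..<n}. \<forall>j\<in>{..<n}. i \<noteq> j \<longrightarrow>
      (\<forall>s\<in>{0..1}. (1 - s) *\<^sub>R q i + s *\<^sub>R Y x i \<noteq> (1 - s) *\<^sub>R q j + s *\<^sub>R Y x j)) F"
  proof (intro eventually_ball_finite ballI finite_lessThan)
    fix i j
    assume "i \<in> {..<n}" "j \<in> {..<n}"
    then show "eventually (\<lambda>x. i \<noteq> j \<longrightarrow>
        (\<forall>s\<in>{0..1}. (1 - s) *\<^sub>R q i + s *\<^sub>R Y x i \<noteq> (1 - s) *\<^sub>R q j + s *\<^sub>R Y x j)) F"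
      using pair[of i j] by (cases "i = j") (auto elim: eventually_mono)
  qed
  with Y show ?thesis
    by eventually_elim (auto simp: Omega_def disk_tuples_def)
qed

lemma eventually_admissible:
  assumes \<phi>: "rel_homeo \<phi>" and P: "admissible n q \<phi> P"
  shows "eventually (admissible n q \<phi>) (config_nhds n P)"
proof -
  have P\<Omega>: "P \<in> Omega n q" "jmap n \<phi> P \<in> Omega n q" and ball: "\<forall>i<n. P i \<in> ball 0 1"
    using P by (auto simp: admissible_def)
  have lim: "((\<lambda>P'. F (P' i)) \<longlongrightarrow> F (P i)) (config_nhds n P)"
    if "continuous_on (cball 0 1) F" "i < n" for F :: "complex \<Rightarrow> complex" and i
    by (rule tendsto_config_nhds_component[OF that]) (use ball that(2) in auto)
  have "eventually (\<lambda>P'. P' \<in> Omega n q) (config_nhds n P)"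
    using lim[OF continuous_on_id'] eventually_config_nhds_disk_tuples
    by (intro eventually_in_Omega[OF P\<Omega>(1)]) auto
  moreover have "eventually (\<lambda>P'. jmap n \<phi> P' \<in> disk_tuples n) (config_nhds n P)"
    using eventually_config_nhds_disk_tuples by (rule eventually_mono) (rule jmap_disk_tuples[OF \<phi>])
  then have "eventually (\<lambda>P'. jmap n \<phi> P' \<in> Omega n q) (config_nhds n P)"
    using lim[OF rel_homeo_continuous_on[OF \<phi>]]
    by (intro eventually_in_Omega[OF P\<Omega>(2)]) (auto simp: jmap_def)
  moreover have "eventually (\<lambda>P'. \<forall>i\<in>{..<n}. P' i \<in> ball 0 1) (config_nhds n P)"
    using lim[OF continuous_on_id'] ball
    by (intro eventually_ball_finite ballI finite_lessThan topological_tendstoD[OF _ open_ball]) auto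
  ultimately show ?thesis
    by eventually_elim (simp add: admissible_def)
qed

lemma continuous_on_braid_path_family:
  assumes I: "disk_isotopy I \<phi>" and \<phi>: "rel_homeo \<phi>"
    and P: "\<And>i. i < n \<Longrightarrow> continuous_on S (\<lambda>s. P s i)"
      "\<And>s i. s \<in> S \<Longrightarrow> i < n \<Longrightarrow> P s i \<in> cball 0 1"
  shows "continuous_on (S \<times> {0..1}) (\<lambda>x. braid_path n q (P (fst x)) I \<phi> (snd x))"
  unfolding braid_path_def
proof (rule continuous_on_tuple)
  fix i
  assume i: "i < n"
  have Pc: "continuous_on U (\<lambda>x. P (fst x) i)" if "U \<subseteq> S \<times> {0..1}" for U
    by (rule continuous_on_compose2[OF P(1)[OF i]]) (use that in \<open>auto intro!: continuous_intros\<close>)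
  have Pr: "P s i \<in> cball 0 1" if "s \<in> S" for s
    using P(2) i that by auto
  show "continuous_on (S \<times> {0..1}) (\<lambda>x.
      if snd x \<le> 1/3 then (1 - 3 * snd x) *\<^sub>R q i + (3 * snd x) *\<^sub>R P (fst x) i
      else if snd x \<le> 2/3 then I (3 * snd x - 1) (P (fst x) i)
      else (1 - (3 * snd x - 2)) *\<^sub>R \<phi> (P (fst x) i) + (3 * snd x - 2) *\<^sub>R q i)"
  proof (rule continuous_on_cases_le)
    show "continuous_on {x \<in> S \<times> {0..1}. snd x \<le> 1/3}
        (\<lambda>x. (1 - 3 * snd x) *\<^sub>R q i + (3 * snd x) *\<^sub>R P (fst x) i)"
      by (intro continuous_intros Pc) auto
    show "continuous_on {x \<in> S \<times> {0..1}. 1/3 \<le> snd x} (\<lambda>x.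
        if snd x \<le> 2/3 then I (3 * snd x - 1) (P (fst x) i)
        else (1 - (3 * snd x - 2)) *\<^sub>R \<phi> (P (fst x) i) + (3 * snd x - 2) *\<^sub>R q i)"
    proof (rule continuous_on_cases_le)
      show "continuous_on {x \<in> {x \<in> S \<times> {0..1}. 1/3 \<le> snd x}. snd x \<le> 2/3}
          (\<lambda>x. I (3 * snd x - 1) (P (fst x) i))"
        by (rule continuous_on_disk_isotopy_compose[OF I])
          (use Pr in \<open>auto intro!: continuous_intros Pc\<close>)
      show "continuous_on {x \<in> {x \<in> S \<times> {0..1}. 1/3 \<le> snd x}. 2/3 \<le> snd x}
          (\<lambda>x. (1 - (3 * snd x - 2)) *\<^sub>R \<phi> (P (fst x) i) + (3 * snd x - 2) *\<^sub>R q i)"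
        by (intro continuous_intros continuous_on_compose2[OF rel_homeo_continuous_on[OF \<phi>] Pc])
          (use Pr in auto)
      show "I (3 * snd x - 1) (P (fst x) i)
          = (1 - (3 * snd x - 2)) *\<^sub>R \<phi> (P (fst x) i) + (3 * snd x - 2) *\<^sub>R q i"
        if "x \<in> {x \<in> S \<times> {0..1}. 1/3 \<le> snd x}" "snd x = 2/3" for x
      proof -
        have "3 * snd x - 1 = 1" "3 * snd x - 2 = 0" "P (fst x) i \<in> cball 0 1"
          using that Pr by auto
        then show ?thesis
          using I by (simp add: disk_isotopy_def)
      qed
    qed (intro continuous_intros)
    show "(1 - 3 * snd x) *\<^sub>R q i + (3 * snd x) *\<^sub>R P (fst x) i
        = (if snd x \<le> 2/3 then I (3 * snd x - 1) (P (fst x) i)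
           else (1 - (3 * snd x - 2)) *\<^sub>R \<phi> (P (fst x) i) + (3 * snd x - 2) *\<^sub>R q i)"
      if "x \<in> S \<times> {0..1}" "snd x = 1/3" for x
    proof -
      have "3 * snd x - 1 = 0" "3 * snd x = 1" "snd x \<le> 2/3" "P (fst x) i \<in> cball 0 1"
        using that Pr by auto
      then show ?thesis
        using I by (simp add: disk_isotopy_def)
    qed
  qed (intro continuous_intros)
qed

lemma config_linepath_0: "P \<in> PiE {..<n} S \<Longrightarrow> config_linepath n P P' 0 = P"
  by (auto simp: config_linepath_def fun_eq_iff PiE_iff extensional_def)

lemma config_linepath_1: "P' \<in> PiE {..<n} S \<Longrightarrow> config_linepath n P P' 1 = P'"
  by (auto simp: config_linepath_def fun_eq_iff PiE_iff extensional_def)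

lemma config_linepath_in_PiE:
  assumes "P \<in> PiE {..<n} S" "P' \<in> PiE {..<n} S" "\<And>i. i < n \<Longrightarrow> convex (S i)" "s \<in> {0..1}"
  shows "config_linepath n P P' s \<in> PiE {..<n} S"
  using assms by (auto simp: config_linepath_def PiE_iff extensional_def intro!: convexD)

lemma braid_path_homotopic_along_segment:
  assumes q: "base_points n q" and I: "disk_isotopy I \<phi>" and \<phi>: "rel_homeo \<phi>"
    and P: "P \<in> disk_tuples n" "P' \<in> disk_tuples n"
    and adm: "\<And>s. s \<in> {0..1} \<Longrightarrow> admissible n q \<phi> (config_linepath n P P' s)"
  shows "homotopic_paths (Conf n) (braid_path n q P I \<phi>) (braid_path n q P' I \<phi>)"
  unfolding homotopic_paths
proof (intro exI[of _ "\<lambda>x. braid_path n q (config_linepath n P P' (fst x)) I \<phi> (snd x)"] conjI ballI)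
  have "config_linepath n P P' s \<in> disk_tuples n" if "s \<in> {0..1}" for s
    using P that unfolding disk_tuples_def by (intro config_linepath_in_PiE) auto
  then show "continuous_on ({0..1} \<times> {0..1}) (\<lambda>x. braid_path n q (config_linepath n P P' (fst x)) I \<phi> (snd x))"
    by (intro continuous_on_braid_path_family[OF I \<phi>])
      (auto simp: config_linepath_def disk_tuples_def PiE_iff intro!: continuous_intros)
  show "(\<lambda>x. braid_path n q (config_linepath n P P' (fst x)) I \<phi> (snd x)) \<in> {0..1} \<times> {0..1} \<rightarrow> Conf n"
  proof (rule Pi_I)
    fix x :: "real \<times> real"
    assume "x \<in> {0..1} \<times> {0..1}"
    then have "fst x \<in> {0..1}" "snd x \<in> {0..1}"
      by auto
    then show "braid_path n q (config_linepath n P P' (fst x)) I \<phi> (snd x) \<in> Conf n"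
      using braid_path_in_Conf(2)[OF q I \<phi> adm[of "fst x"]] by (auto simp: path_image_def)
  qed
  show "braid_path n q (config_linepath n P P' (fst (0, t))) I \<phi> (snd (0, t)) = braid_path n q P I \<phi> t"
    "braid_path n q (config_linepath n P P' (fst (1, t))) I \<phi> (snd (1, t)) = braid_path n q P' I \<phi> t" for t
    using P by (simp_all add: disk_tuples_def config_linepath_0 config_linepath_1)
qed (simp_all add: pathstart_def pathfinish_def braid_path_0_1)

lemma beta_eq_along_segment:
  assumes q: "base_points n q" and \<phi>: "rel_homeo \<phi>"
    and P: "P \<in> disk_tuples n" "P' \<in> disk_tuples n"
    and adm: "\<And>s. s \<in> {0..1} \<Longrightarrow> admissible n q \<phi> (config_linepath n P P' s)"
  shows "beta n q P \<phi> = beta n q P' \<phi>"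
proof -
  have "admissible n q \<phi> P" "admissible n q \<phi> P'"
    using adm[of 0] adm[of 1] P by (simp_all add: disk_tuples_def config_linepath_0 config_linepath_1)
  moreover have H: "homotopic_paths (Conf n) (braid_path n q P I \<phi>) (braid_path n q P' I \<phi>)"
    if "disk_isotopy I \<phi>" for I
    by (rule braid_path_homotopic_along_segment[OF q that \<phi> P adm])
  have "(\<exists>I. disk_isotopy I \<phi> \<and> homotopic_paths (Conf n) (braid_path n q P I \<phi>) h)
      \<longleftrightarrow> (\<exists>I. disk_isotopy I \<phi> \<and> homotopic_paths (Conf n) (braid_path n q P' I \<phi>) h)" for h
    using H by (meson homotopic_paths_trans homotopic_paths_sym)
  ultimately show ?thesis
    by (simp add: beta_admissible)
qed

definition tuple_box :: "nat \<Rightarrow> (nat \<Rightarrow> complex) \<Rightarrow> real \<Rightarrow> (nat \<Rightarrow> complex) set" where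
  "tuple_box n c r = PiE {..<n} (\<lambda>i. ball (c i) r \<inter> cball 0 1)"

lemma tuple_box_subset: "tuple_box n c r \<subseteq> disk_tuples n"
  unfolding tuple_box_def disk_tuples_def by (rule PiE_mono) auto

lemma admissible_tuple_box_cover:
  assumes \<phi>: "rel_homeo \<phi>" and P: "admissible n q \<phi> P"
    and D: "\<forall>x. \<forall>e>0. \<exists>d\<in>D. dist d x < e"
  obtains c r where "c \<in> PiE {..<n} (\<lambda>_. D)" "r \<in> \<rat>" "P \<in> tuple_box n c r"
    "tuple_box n c r \<subseteq> Collect (admissible n q \<phi>)"
proof -
  obtain e where "e > 0" and e: "\<forall>P'\<in>disk_tuples n. (\<forall>i<n. dist (P' i) (P i) < e) \<longrightarrow> admissible n q \<phi> P'"
    using eventually_admissible[OF \<phi> P] unfolding eventually_config_nhds by blast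
  have "e/4 > 0"
    using \<open>e > 0\<close> by simp
  then have "\<exists>d\<in>D. dist d (P i) < e/4" for i
    using D by blast
  then obtain c0 where c0: "\<And>i. c0 i \<in> D" "\<And>i. dist (c0 i) (P i) < e/4"
    by metis
  obtain r where r: "r \<in> \<rat>" "e/4 < r" "r < e/2"
    using Rats_dense_in_real[of "e/4" "e/2"] \<open>e > 0\<close> by auto
  have "P \<in> disk_tuples n"
    using P Omega_subset_disk_tuples by (auto simp: admissible_def)
  show thesis
  proof (rule that[of "restrict c0 {..<n}" r])
    show "restrict c0 {..<n} \<in> PiE {..<n} (\<lambda>_. D)" "r \<in> \<rat>"
      using c0 r by auto
    have "dist (c0 i) (P i) < r" for i
      using c0(2)[of i] r(2) by linarith
    then show "P \<in> tuple_box n (restrict c0 {..<n}) r"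
      using \<open>P \<in> disk_tuples n\<close> by (auto simp: tuple_box_def disk_tuples_def PiE_iff)
    show "tuple_box n (restrict c0 {..<n}) r \<subseteq> Collect (admissible n q \<phi>)"
    proof
      fix P'
      assume P': "P' \<in> tuple_box n (restrict c0 {..<n}) r"
      have "dist (P' i) (P i) < e" if "i < n" for i
      proof -
        have "dist (P' i) (c0 i) < r"
          using P' that by (auto simp: tuple_box_def PiE_iff dist_commute)
        then show ?thesis
          using dist_triangle[of "P' i" "P i" "c0 i"] c0(2)[of i] r(3) \<open>e > 0\<close> by linarith
      qed
      then show "P' \<in> Collect (admissible n q \<phi>)"
        using e P' tuple_box_subset by blast
    qed
  qed
qed

lemma measurable_count_space_locally_constant:
  fixes f :: "'a \<Rightarrow> 'b"
  assumes \<B>: "countable \<B>" "\<B> \<subseteq> sets M"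
    and local: "\<And>x. x \<in> G \<Longrightarrow> \<exists>B\<in>\<B>. x \<in> B \<and> B \<subseteq> G \<and> (\<forall>y\<in>B. f y = f x)"
    and outside: "\<And>x. x \<notin> G \<Longrightarrow> f x = c"
  shows "f \<in> M \<rightarrow>\<^sub>M count_space UNIV"
proof (rule measurableI)
  define \<B>' where "\<B>' A = {B\<in>\<B>. B \<subseteq> G \<and> f ` B \<subseteq> A}" for A
  have union: "\<Union>(\<B>' A) = G \<inter> f -` A" for A
  proof
    show "\<Union>(\<B>' A) \<subseteq> G \<inter> f -` A"
      unfolding \<B>'_def by blast
    show "G \<inter> f -` A \<subseteq> \<Union>(\<B>' A)"
    proof
      fix x
      assume x: "x \<in> G \<inter> f -` A"
      then obtain B where B: "B \<in> \<B>" "x \<in> B" "B \<subseteq> G" and const: "\<forall>y\<in>B. f y = f x"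
        using local by blast
      have "f ` B \<subseteq> A"
        using x const by auto
      with B have "B \<in> \<B>' A"
        unfolding \<B>'_def by blast
      with B(2) show "x \<in> \<Union>(\<B>' A)"
        by blast
    qed
  qed
  have sets: "\<Union>(\<B>' A) \<in> sets M" for A
  proof (rule sets.countable_Union)
    show "countable (\<B>' A)"
      using \<B>(1) by (rule countable_subset[rotated]) (auto simp: \<B>'_def)
    show "\<B>' A \<subseteq> sets M"
      using \<B>(2) by (auto simp: \<B>'_def)
  qed
  have G: "G \<in> sets M"
    using sets[of UNIV] union[of UNIV] by simp
  fix A
  have "f -` A \<inter> space M = \<Union>(\<B>' A) \<union> (if c \<in> A then space M - G else {})"
    using union[of A] outside sets.sets_into_space[OF G] by auto
  then show "f -` A \<inter> space M \<in> sets M"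
    using sets G by auto
qed simp

lemma countable_metric_denseE:
  obtains D :: "'a::{metric_space, second_countable_topology} set"
  where "countable D" "\<forall>x. \<forall>e>0. \<exists>d\<in>D. dist d x < e"
proof -
  obtain D :: "'a set" where D: "countable D" "\<And>X. open X \<Longrightarrow> X \<noteq> {} \<Longrightarrow> \<exists>d\<in>D. d \<in> X"
    by (rule countable_dense_setE) blast
  have "\<exists>d\<in>D. dist d x < e" if "e > 0" for x :: 'a and e :: real
    using D(2)[of "ball x e"] that by (auto simp: dist_commute)
  with D(1) show thesis
    by (intro that) auto
qed

lemma tuple_box_sets:
  assumes "\<And>i. i < n \<Longrightarrow> sets (M i) = sets (restrict_space borel (cball (0::complex) 1))"
  shows "tuple_box n c r \<in> sets (PiM {..<n} M)"
  unfolding tuple_box_def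
proof (rule sets_PiM_I_finite)
  fix i
  assume "i \<in> {..<n}"
  moreover have "cball 0 1 \<inter> ball (c i) r \<in> sets (restrict_space borel (cball (0::complex) 1))"
    unfolding sets_restrict_space by (intro imageI borel_open open_ball)
  ultimately show "ball (c i) r \<inter> cball 0 1 \<in> sets (M i)"
    using assms by (simp add: Int_commute)
qed (rule finite_lessThan)

lemma beta_constant_on_tuple_box:
  assumes q: "base_points n q" and \<phi>: "rel_homeo \<phi>"
    and box: "tuple_box n c r \<subseteq> Collect (admissible n q \<phi>)"
    and P: "P \<in> tuple_box n c r" "P' \<in> tuple_box n c r"
  shows "beta n q P' \<phi> = beta n q P \<phi>"
proof (rule beta_eq_along_segment[OF q \<phi>])
  show "P' \<in> disk_tuples n" "P \<in> disk_tuples n"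
    using P tuple_box_subset by blast+
  show "admissible n q \<phi> (config_linepath n P' P s)" if "s \<in> {0..1}" for s
  proof -
    have "config_linepath n P' P s \<in> tuple_box n c r"
      using P that unfolding tuple_box_def by (intro config_linepath_in_PiE) (auto intro!: convex_Int)
    then show ?thesis
      using box by blast
  qed
qed

lemma measurable_beta:
  assumes q: "base_points n q" and \<phi>: "rel_homeo \<phi>"
    and M: "\<And>i. i < n \<Longrightarrow> sets (M i) = sets (restrict_space borel (cball (0::complex) 1))"
  shows "(\<lambda>P. beta n q P \<phi>) \<in> PiM {..<n} M \<rightarrow>\<^sub>M count_space UNIV"
proof -
  obtain D :: "complex set" where D: "countable D" and dense: "\<forall>x. \<forall>e>0. \<exists>d\<in>D. dist d x < e"
    by (rule countable_metric_denseE)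
  let ?\<B> = "(\<lambda>(c, r). tuple_box n c r) ` (PiE {..<n} (\<lambda>_. D) \<times> \<rat>)"
  show ?thesis
  proof (rule measurable_count_space_locally_constant[where c = "{}"])
    show "countable ?\<B>"
      by (intro countable_image countable_SIGMA countable_PiE D(1) countable_rat) auto
    show "?\<B> \<subseteq> sets (PiM {..<n} M)"
      using tuple_box_sets[OF M] by auto
    show "\<exists>B\<in>?\<B>. P \<in> B \<and> B \<subseteq> Collect (admissible n q \<phi>)
        \<and> (\<forall>P'\<in>B. beta n q P' \<phi> = beta n q P \<phi>)"
      if "P \<in> Collect (admissible n q \<phi>)" for P
    proof -
      from that have "admissible n q \<phi> P"
        by simp
      then obtain c r where cr: "c \<in> PiE {..<n} (\<lambda>_. D)" "r \<in> \<rat>" and P: "P \<in> tuple_box n c r"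
        and box: "tuple_box n c r \<subseteq> Collect (admissible n q \<phi>)"
        by (rule admissible_tuple_box_cover[OF \<phi> _ dense])
      show ?thesis
      proof (rule bexI)
        show "P \<in> tuple_box n c r \<and> tuple_box n c r \<subseteq> Collect (admissible n q \<phi>)
            \<and> (\<forall>P'\<in>tuple_box n c r. beta n q P' \<phi> = beta n q P \<phi>)"
          using P box beta_constant_on_tuple_box[OF q \<phi> box P] by blast
        show "tuple_box n c r \<in> ?\<B>"
          by (rule rev_image_eqI[of "(c, r)"]) (use cr in auto)
      qed
    qed
    show "beta n q P \<phi> = {}" if "P \<notin> Collect (admissible n q \<phi>)" for P
      using that by (simp add: beta_not_admissible)
  qed
qed

theorem proposition1:
  fixes n :: nat and q :: "nat \<Rightarrow> complex" and lam :: "nat \<Rightarrow> complex measure"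
  assumes "n \<ge> 1"
    and "base_points n q"
    and "\<forall>i<n. prob_space (lam i) \<and> sets (lam i) = sets (restrict_space borel (cball (0::complex) 1))"
    and "AE P in PiM {..<n} lam. P \<in> Omega n q"
  shows "(\<forall>\<phi>. rel_homeo \<phi> \<and> (\<forall>i<n. preserves \<phi> (lam i)) \<longrightarrow>
            (\<lambda>P. beta n q P \<phi>) \<in> measurable (PiM {..<n} lam) (count_space UNIV))
       \<and> (\<forall>\<phi> \<psi>. rel_homeo \<phi> \<and> (\<forall>i<n. preserves \<phi> (lam i))
              \<and> rel_homeo \<psi> \<and> (\<forall>i<n. preserves \<psi> (lam i)) \<longrightarrow>
            (AE P in PiM {..<n} lam. (\<forall>i<n. P i \<in> ball 0 1) \<longrightarrow>
               beta n q P (\<psi> \<circ> \<phi>) = braid_mult n (beta n q P \<phi>) (beta n q (jmap n \<phi> P) \<psi>)))"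
proof (intro conjI allI impI)
  fix \<phi>
  assume "rel_homeo \<phi> \<and> (\<forall>i<n. preserves \<phi> (lam i))"
  then show "(\<lambda>P. beta n q P \<phi>) \<in> measurable (PiM {..<n} lam) (count_space UNIV)"
    using assms(2,3) by (intro measurable_beta) auto
next
  fix \<phi> \<psi>
  assume h: "rel_homeo \<phi> \<and> (\<forall>i<n. preserves \<phi> (lam i)) \<and> rel_homeo \<psi> \<and> (\<forall>i<n. preserves \<psi> (lam i))"
  have prob: "\<And>i. i < n \<Longrightarrow> prob_space (lam i)"
    using assms(3) by blast
  have "\<forall>i<n. preserves (\<psi> \<circ> \<phi>) (lam i)"
    using h preserves_compose by blast
  then have "AE P in PiM {..<n} lam. jmap n (\<psi> \<circ> \<phi>) P \<in> Omega n q"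
    by (intro AE_jmap[OF prob _ assms(4)]) blast+
  moreover have "AE P in PiM {..<n} lam. jmap n \<phi> P \<in> Omega n q"
    using h by (intro AE_jmap[OF prob _ assms(4)]) blast+
  ultimately show "AE P in PiM {..<n} lam. (\<forall>i<n. P i \<in> ball 0 1) \<longrightarrow>
      beta n q P (\<psi> \<circ> \<phi>) = braid_mult n (beta n q P \<phi>) (beta n q (jmap n \<phi> P) \<psi>)"
    using assms(4)
  proof eventually_elim
    case (elim P)
    show ?case
      using elim h by (intro impI beta_cocycle[OF assms(2)]) auto
  qed
qed

end
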